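(* Let $X$ be a universally octahedral real Banach space. Then for every $\varepsilon>0$, every finite dimensional subspace $Z$ of $X$ and every $n\in\mathbb N$ there exists a linear operator $T:\ell_\infty^n\to X$ with $\|T\|\le 1$ such that $$\|z+T(y)\|\ge(1-\varepsilon)(\|z\|+\|y\|)$$ for every $y\in\ell_\infty^n$ and every $z\in Z$. (In fact it suffices to assume that $L(\ell_p^n,X)$ is octahedral for every $n\in\mathbb N$ and every $1<p<\infty$.)
   Context: All Banach spaces are real. $L(Y,X)$ denotes the space of bounded linear operators from $Y$ to $X$ with the operator norm. A Banach space $W$ is octahedral if for every finite dimensional subspace $E$ of $W$ and every $\varepsilon>0$ there exists $y\in W$, $\|y\|=1$, with $\|x+\lambda y\|\ge(1-\varepsilon)(\|x\|+|\lambda|)$ for all $x\in E$, $\lambda\in\mathbb R$. A Banach space $X$ is universally octahedral if $L(Y,X)$ is octahedral for every non-zero Banach space $Y$. $\ell_p^n$ is $\mathbb R^n$ with the $p$-norm. *)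

theory Defs
  imports "HOL-Analysis.Analysis"
begin

definition lp_norm :: "real \<Rightarrow> nat \<Rightarrow> (nat \<Rightarrow> real) \<Rightarrow> real" where
  "lp_norm p n a = (\<Sum>i<n. \<bar>a i\<bar> powr p) powr (1 / p)"

text \<open>An operator T : l_p^n -> X is represented by the images x i = T e_i (i < n),
  with x i = 0 for i >= n. Its operator norm:\<close>
definition lp_opnorm :: "real \<Rightarrow> nat \<Rightarrow> (nat \<Rightarrow> 'a::real_normed_vector) \<Rightarrow> real" where
  "lp_opnorm p n x = (SUP a \<in> {a. lp_norm p n a \<le> 1}. norm (\<Sum>i<n. a i *\<^sub>R x i))"

text \<open>Carrier of L(l_p^n, X) in this representation.\<close>
definition Lspace :: "nat \<Rightarrow> (nat \<Rightarrow> 'a::real_normed_vector) set" where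
  "Lspace n = {x. \<forall>i\<ge>n. x i = 0}"

text \<open>L(l_p^n, X) is octahedral: for every finite dimensional subspace E (spanned by
  B 0, ..., B (k-1)) and every eps > 0 there is a norm one y with
  ||x + l y|| >= (1 - eps)(||x|| + |l|) for all x in E and real l.\<close>
definition octahedral_Lp :: "'a::real_normed_vector itself \<Rightarrow> real \<Rightarrow> nat \<Rightarrow> bool" where
  "octahedral_Lp (_::'a itself) p n \<longleftrightarrow>
     (\<forall>(k::nat) (B :: nat \<Rightarrow> nat \<Rightarrow> 'a) (\<epsilon>::real).
        \<epsilon> > 0 \<and> (\<forall>j<k. B j \<in> Lspace n) \<longrightarrow>
        (\<exists>y \<in> Lspace n. lp_opnorm p n y = 1 \<and>
           (\<forall>(c :: nat \<Rightarrow> real) (l::real).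
              lp_opnorm p n (\<lambda>i. (\<Sum>j<k. c j *\<^sub>R B j i) + l *\<^sub>R y i)
                \<ge> (1 - \<epsilon>) * (lp_opnorm p n (\<lambda>i. \<Sum>j<k. c j *\<^sub>R B j i) + \<bar>l\<bar>))))"

definition linf_norm :: "real ^ 'n::finite \<Rightarrow> real" where
  "linf_norm y = Max (range (\<lambda>i. \<bar>y $ i\<bar>))"

end

theory Submission
  imports Defs
begin

text \<open>Write \<open>N\<close> for the dimension \<open>n\<close> and take an even exponent \<open>p = 2m\<close> so large that
  \<open>N\<^sup>1\<^sup>/\<^sup>p \<le> 1 + \<epsilon>/2\<close>; then \<open>\<parallel>y\<parallel>\<^sub>\<infinity> \<le> \<parallel>y\<parallel>\<^sub>p \<le> N\<^sup>1\<^sup>/\<^sup>p \<parallel>y\<parallel>\<^sub>\<infinity>\<close>. Octahedrality of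
  \<open>L(\<ell>\<^sub>p\<^sup>N, X)\<close>, applied to the finite dimensional space of rank one operators \<open>\<phi> \<otimes> w\<close> with
  \<open>w\<close> in a finite dimensional \<open>F \<supseteq> Z\<close>, gives a norm one \<open>g : \<ell>\<^sub>p\<^sup>N \<rightarrow> X\<close> with
  \<open>\<parallel>\<phi> \<otimes> w + l g\<parallel> \<ge> (1 - \<delta>)(\<parallel>\<phi> \<otimes> w\<parallel> + |l|)\<close>. For a unit vector \<open>u\<close> of \<open>\<ell>\<^sub>p\<^sup>N\<close> choose
  \<open>\<phi> = u\<^sup>p\<^sup>-\<^sup>1\<close>, the functional norming \<open>u\<close>: a vector \<open>a\<close> nearly norming \<open>\<phi> \<otimes> w + l g\<close> nearly
  attains \<open>\<phi>\<close>, so by uniform convexity of \<open>\<ell>\<^sub>p\<^sup>N\<close> it is close to \<open>u\<close>, and therefore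
  \<open>\<parallel>w + l g(u)\<parallel> \<ge> (1 - \<kappa>)(\<parallel>w\<parallel> + l)\<close>. The operator \<open>T = N\<^sup>-\<^sup>1\<^sup>/\<^sup>p g\<close>, restricted to
  \<open>\<ell>\<^sub>\<infinity>\<^sup>N \<subseteq> \<ell>\<^sub>p\<^sup>N\<close>, then does the job.\<close>

section \<open>Convexity of even powers and uniform convexity of \<open>\<ell>\<^sub>2\<^sub>m\<^sup>n\<close>\<close>

lemma odd_power_strict_mono:
  fixes x y :: real
  assumes "odd n" "x < y"
  shows "x ^ n < y ^ n"
proof -
  have "x ^ n \<le> y ^ n" using assms by (intro power_mono_odd) auto
  moreover have "x ^ n \<noteq> y ^ n"
    using assms odd_real_root_power_cancel[of n x] odd_real_root_power_cancel[of n y] by auto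
  ultimately show ?thesis by simp
qed

definition tangent_gap :: "nat \<Rightarrow> real \<Rightarrow> real \<Rightarrow> real" where
  "tangent_gap m x t = t ^ (2*m) - x ^ (2*m) - 2 * real m * x ^ (2*m - 1) * (t - x)"

lemma tangent_gap_pos:
  assumes "0 < m" "t \<noteq> x"
  shows "0 < tangent_gap m x t"
proof -
  have odd: "odd (2*m - 1)" using assms(1) by simp
  have deriv: "\<And>z. DERIV (\<lambda>s. s ^ (2*m)) z :> 2 * real m * z ^ (2*m - 1)"
    by (auto intro!: derivative_eq_intros)
  consider "x < t" | "t < x" using assms(2) by linarith
  then show ?thesis
  proof cases
    case 1
    then obtain z where "x < z" "t ^ (2*m) - x ^ (2*m) = (t - x) * (2 * real m * z ^ (2*m - 1))"
      using MVT2[OF 1, of "\<lambda>s. s ^ (2*m)" "\<lambda>z. 2 * real m * z ^ (2*m - 1)"] deriv by blast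
    moreover have "x ^ (2*m - 1) < z ^ (2*m - 1)" using odd \<open>x < z\<close> by (rule odd_power_strict_mono)
    then have "(t - x) * (2 * real m * x ^ (2*m - 1)) < (t - x) * (2 * real m * z ^ (2*m - 1))"
      using 1 assms(1) by (intro mult_strict_left_mono) auto
    ultimately show ?thesis by (simp add: tangent_gap_def algebra_simps)
  next
    case 2
    then obtain z where "z < x" "x ^ (2*m) - t ^ (2*m) = (x - t) * (2 * real m * z ^ (2*m - 1))"
      using MVT2[OF 2, of "\<lambda>s. s ^ (2*m)" "\<lambda>z. 2 * real m * z ^ (2*m - 1)"] deriv by blast
    moreover have "z ^ (2*m - 1) < x ^ (2*m - 1)" using odd \<open>z < x\<close> by (rule odd_power_strict_mono)
    then have "(x - t) * (2 * real m * z ^ (2*m - 1)) < (x - t) * (2 * real m * x ^ (2*m - 1))"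
      using 2 assms(1) by (intro mult_strict_left_mono) auto
    ultimately show ?thesis by (simp add: tangent_gap_def algebra_simps)
  qed
qed

lemma tangent_gap_nonneg: "0 < m \<Longrightarrow> 0 \<le> tangent_gap m x t"
  using tangent_gap_pos[of m t x] by (cases "t = x") (auto simp: tangent_gap_def)

lemma tangent_gap_uniformly_pos:
  assumes "0 < m" "0 < \<rho>"
  obtains c where "0 < c"
    "\<And>x t. \<bar>x\<bar> \<le> 1 \<Longrightarrow> \<bar>t\<bar> \<le> 1 \<Longrightarrow> \<rho> \<le> \<bar>t - x\<bar> \<Longrightarrow> c \<le> tangent_gap m x t"
proof -
  define K where "K = {z :: real \<times> real. \<bar>fst z\<bar> \<le> 1 \<and> \<bar>snd z\<bar> \<le> 1 \<and> \<rho> \<le> \<bar>snd z - fst z\<bar>}"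
  have "K \<subseteq> cbox (-1, -1) (1, 1)" by (auto simp: K_def cbox_Pair_eq)
  moreover have "closed K"
    unfolding K_def by (intro closed_Collect_conj closed_Collect_le continuous_intros)
  ultimately have "compact K"
    using bounded_subset[OF bounded_cbox] by (auto simp: compact_eq_bounded_closed)
  have cont: "continuous_on K (\<lambda>z. tangent_gap m (fst z) (snd z))"
    unfolding tangent_gap_def by (intro continuous_intros)
  show ?thesis
  proof (cases "K = {}")
    case True
    then show ?thesis by (intro that[of 1]) (auto simp: K_def)
  next
    case False
    obtain z0 where "z0 \<in> K"
      and min: "\<And>z. z \<in> K \<Longrightarrow> tangent_gap m (fst z0) (snd z0) \<le> tangent_gap m (fst z) (snd z)"
      using continuous_attains_inf[OF \<open>compact K\<close> False cont] by blast
    then have "snd z0 \<noteq> fst z0" using assms(2) by (auto simp: K_def)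
    then show ?thesis
      using min by (intro that[of "tangent_gap m (fst z0) (snd z0)"] tangent_gap_pos[OF assms(1)])
        (auto simp: K_def)
  qed
qed

definition power_sum :: "nat \<Rightarrow> nat \<Rightarrow> (nat \<Rightarrow> real) \<Rightarrow> real" where
  "power_sum m n a = (\<Sum>i<n. a i ^ (2*m))"

text \<open>For \<open>power_sum m n u = 1\<close>, the functional \<open>dual_pairing m n u\<close> is the norming functional
  of \<open>u\<close> in \<open>\<ell>\<^sub>2\<^sub>m\<^sup>n\<close>.\<close>
definition dual_pairing :: "nat \<Rightarrow> nat \<Rightarrow> (nat \<Rightarrow> real) \<Rightarrow> (nat \<Rightarrow> real) \<Rightarrow> real" where
  "dual_pairing m n u a = (\<Sum>i<n. u i ^ (2*m - 1) * a i)"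

lemma power_sum_nonneg: "0 \<le> power_sum m n a"
  unfolding power_sum_def by (intro sum_nonneg) (simp add: zero_le_even_power)

lemma power_sum_uminus [simp]: "power_sum m n (\<lambda>i. - a i) = power_sum m n a"
  by (simp add: power_sum_def)

lemma power_sum_scale: "power_sum m n (\<lambda>i. c * a i) = c ^ (2*m) * power_sum m n a"
  by (simp add: power_sum_def power_mult_distrib sum_distrib_left)

lemma dual_pairing_uminus [simp]: "dual_pairing m n u (\<lambda>i. - a i) = - dual_pairing m n u a"
  by (simp add: dual_pairing_def sum_negf)

lemma power_pred_mult: "0 < m \<Longrightarrow> x * x ^ (2*m - 1) = (x::real) ^ (2*m)"
  by (metis Suc_pred' nat_0_less_mult_iff pos2 power_Suc)

lemma abs_le_1_if_power_sum_le_1: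
  assumes "0 < m" "power_sum m n a \<le> 1" "i < n"
  shows "\<bar>a i\<bar> \<le> 1"
proof -
  have "\<bar>a i\<bar> ^ (2*m) \<le> power_sum m n a"
    unfolding power_sum_def power_even_abs[of "2*m", simplified]
    using assms(3) by (intro member_le_sum) (auto simp: zero_le_even_power)
  then have "\<bar>a i\<bar> ^ (2*m) \<le> 1" using assms(2) by linarith
  then show ?thesis using assms(1) by (simp add: power_le_one_iff)
qed

lemma sum_tangent_gap:
  assumes "0 < m"
  shows "(\<Sum>i<n. tangent_gap m (u i) (a i))
    = power_sum m n a - power_sum m n u - 2 * real m * (dual_pairing m n u a - power_sum m n u)"
proof -
  have "tangent_gap m x t = t ^ (2*m) - x ^ (2*m) - 2 * real m * (x ^ (2*m - 1) * t - x ^ (2*m))"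
    for x t
    unfolding tangent_gap_def power_pred_mult[OF assms, symmetric] by (simp add: algebra_simps)
  then show ?thesis
    unfolding power_sum_def dual_pairing_def
    by (simp add: sum_subtractf sum_distrib_left right_diff_distrib)
qed

lemma sum_tangent_gap_le:
  assumes "0 < m" "power_sum m n u = 1" "power_sum m n a \<le> 1"
  shows "(\<Sum>i<n. tangent_gap m (u i) (a i)) \<le> 2 * real m * (1 - dual_pairing m n u a)"
  using assms by (simp add: sum_tangent_gap algebra_simps)

lemma dual_pairing_le_1:
  assumes "0 < m" "power_sum m n u = 1" "power_sum m n a \<le> 1"
  shows "dual_pairing m n u a \<le> 1"
proof -
  have "0 \<le> (\<Sum>i<n. tangent_gap m (u i) (a i))"
    by (intro sum_nonneg tangent_gap_nonneg[OF assms(1)])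
  then have "0 \<le> 2 * real m * (1 - dual_pairing m n u a)"
    using sum_tangent_gap_le[OF assms] by linarith
  then show ?thesis using assms(1) by (simp add: zero_le_mult_iff)
qed

lemma dual_pairing_near_1_imp_close:
  assumes "0 < m" "0 < \<rho>"
  obtains \<eta> where "0 < \<eta>"
    "\<And>u a i. power_sum m n u = 1 \<Longrightarrow> power_sum m n a \<le> 1 \<Longrightarrow> 1 - \<eta> \<le> dual_pairing m n u a
      \<Longrightarrow> i < n \<Longrightarrow> \<bar>a i - u i\<bar> < \<rho>"
proof -
  obtain c where "0 < c" and c:
    "\<And>x t. \<bar>x\<bar> \<le> 1 \<Longrightarrow> \<bar>t\<bar> \<le> 1 \<Longrightarrow> \<rho> \<le> \<bar>t - x\<bar> \<Longrightarrow> c \<le> tangent_gap m x t"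
    using tangent_gap_uniformly_pos[OF assms] by blast
  show ?thesis
  proof (rule that)
    show "0 < c / (4 * real m)" using \<open>0 < c\<close> assms(1) by simp
    fix u a i
    assume u: "power_sum m n u = 1" and a: "power_sum m n a \<le> 1"
      and near: "1 - c / (4 * real m) \<le> dual_pairing m n u a" and "i < n"
    have "tangent_gap m (u i) (a i) \<le> (\<Sum>i<n. tangent_gap m (u i) (a i))"
      using \<open>i < n\<close> by (intro member_le_sum tangent_gap_nonneg[OF assms(1)]) auto
    also have "\<dots> \<le> 2 * real m * (1 - dual_pairing m n u a)"
      by (rule sum_tangent_gap_le[OF assms(1) u a])
    also have "\<dots> \<le> c / 2" using near assms(1) by (simp add: field_simps)
    finally have "tangent_gap m (u i) (a i) < c" using \<open>0 < c\<close> by simp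
    moreover have "\<bar>u i\<bar> \<le> 1" "\<bar>a i\<bar> \<le> 1"
      using abs_le_1_if_power_sum_le_1[OF assms(1) _ \<open>i < n\<close>] u a by auto
    ultimately show "\<bar>a i - u i\<bar> < \<rho>" using c by force
  qed
qed

section \<open>Operator norms on \<open>\<ell>\<^sub>2\<^sub>m\<^sup>n\<close>\<close>

lemma lp_opnorm_cong:
  assumes "\<And>i. i < n \<Longrightarrow> x i = y i"
  shows "lp_opnorm p n x = lp_opnorm p n y"
proof -
  have "(\<Sum>i<n. a i *\<^sub>R x i) = (\<Sum>i<n. a i *\<^sub>R y i)" for a
    using assms by (intro sum.cong) auto
  then show ?thesis by (simp add: lp_opnorm_def)
qed

lemma lp_norm_even:
  assumes "0 < m"
  shows "lp_norm (2 * real m) n a = root (2*m) (power_sum m n a)"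
proof -
  have "\<bar>a i\<bar> powr (2 * real m) = a i ^ (2*m)" for i
    using assms powr_realpow'[of "\<bar>a i\<bar>" "2*m"] by (simp add: power_even_abs)
  then show ?thesis
    using assms power_sum_nonneg[of m n a]
    by (simp add: lp_norm_def power_sum_def root_powr_inverse[of "2*m"])
qed

lemma lp_norm_even_le_1_iff: "0 < m \<Longrightarrow> lp_norm (2 * real m) n a \<le> 1 \<longleftrightarrow> power_sum m n a \<le> 1"
  unfolding lp_norm_even[of m] by simp

context
  fixes m n :: nat and x :: "nat \<Rightarrow> 'a::real_normed_vector"
  assumes m_pos: "0 < m"
begin

lemma bdd_above_lp_opnorm:
  "bdd_above ((\<lambda>a. norm (\<Sum>i<n. a i *\<^sub>R x i)) ` {a. lp_norm (2 * real m) n a \<le> 1})"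
proof (rule bdd_aboveI2)
  fix a assume "a \<in> {a. lp_norm (2 * real m) n a \<le> 1}"
  then have "\<bar>a i\<bar> \<le> 1" if "i < n" for i
    using abs_le_1_if_power_sum_le_1[OF m_pos _ that] lp_norm_even_le_1_iff[OF m_pos] by blast
  then have "norm (\<Sum>i<n. a i *\<^sub>R x i) \<le> (\<Sum>i<n. 1 * norm (x i))"
    by (intro sum_norm_le) (auto intro!: mult_left_le_one_le)
  then show "norm (\<Sum>i<n. a i *\<^sub>R x i) \<le> (\<Sum>i<n. norm (x i))" by simp
qed

lemma less_lp_opnorm_iff:
  "V < lp_opnorm (2 * real m) n x \<longleftrightarrow> (\<exists>a. power_sum m n a \<le> 1 \<and> V < norm (\<Sum>i<n. a i *\<^sub>R x i))"
proof -
  have "(\<lambda>_. 0) \<in> {a. lp_norm (2 * real m) n a \<le> 1}"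
    using m_pos by (simp add: lp_norm_even_le_1_iff power_sum_def power_0_left)
  then have ne: "{a. lp_norm (2 * real m) n a \<le> 1} \<noteq> {}" by blast
  show ?thesis
    unfolding lp_opnorm_def less_cSUP_iff[OF ne bdd_above_lp_opnorm]
    by (simp add: lp_norm_even_le_1_iff[OF m_pos])
qed

lemma norm_sum_le_lp_opnorm:
  "power_sum m n a \<le> 1 \<Longrightarrow> norm (\<Sum>i<n. a i *\<^sub>R x i) \<le> lp_opnorm (2 * real m) n x"
  unfolding lp_opnorm_def
  by (rule cSUP_upper[OF _ bdd_above_lp_opnorm]) (simp add: lp_norm_even_le_1_iff[OF m_pos])

lemma lp_opnorm_nonneg: "0 \<le> lp_opnorm (2 * real m) n x"
  using norm_sum_le_lp_opnorm[of "\<lambda>_. 0"] m_pos by (simp add: power_sum_def power_0_left)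

lemma norm_le_lp_opnorm:
  assumes "i < n"
  shows "norm (x i) \<le> lp_opnorm (2 * real m) n x"
proof -
  have "power_sum m n (\<lambda>j. if j = i then 1 else 0) = 1"
  proof -
    have "(\<Sum>j<n. (if j = i then 1 else 0::real) ^ (2*m)) = (\<Sum>j<n. if j = i then 1 else 0)"
      using m_pos by (intro sum.cong) auto
    then show ?thesis using assms by (simp add: power_sum_def)
  qed
  moreover have "(\<Sum>j<n. (if j = i then 1 else 0) *\<^sub>R x j) = (\<Sum>j<n. if j = i then x j else 0)"
    by (intro sum.cong) auto
  then have "(\<Sum>j<n. (if j = i then 1 else 0) *\<^sub>R x j) = x i"
    using assms by simp
  ultimately show ?thesis using norm_sum_le_lp_opnorm[of "\<lambda>j. if j = i then 1 else 0"] by simp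
qed

lemma norm_sum_le_lp_norm_mult_lp_opnorm:
  "norm (\<Sum>i<n. a i *\<^sub>R x i) \<le> lp_norm (2 * real m) n a * lp_opnorm (2 * real m) n x"
proof (cases "power_sum m n a = 0")
  case True
  then have "a i = 0" if "i < n" for i
    using that m_pos sum_nonneg_eq_0_iff[of "{..<n}" "\<lambda>i. a i ^ (2*m)"]
    by (auto simp: power_sum_def zero_le_even_power)
  then show ?thesis using lp_opnorm_nonneg by (simp add: lp_norm_even[OF m_pos] True)
next
  case False
  define s where "s = lp_norm (2 * real m) n a"
  have "0 < s" using False power_sum_nonneg[of m n a] m_pos by (simp add: s_def lp_norm_even)
  have "s ^ (2*m) = power_sum m n a"
    using m_pos power_sum_nonneg by (simp add: s_def lp_norm_even)
  then have "power_sum m n (\<lambda>i. inverse s * a i) = 1"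
    using False \<open>0 < s\<close> by (simp add: power_sum_scale power_inverse)
  then have "norm (\<Sum>i<n. (inverse s * a i) *\<^sub>R x i) \<le> lp_opnorm (2 * real m) n x"
    by (rule norm_sum_le_lp_opnorm[OF eq_refl])
  moreover have "(\<Sum>i<n. (inverse s * a i) *\<^sub>R x i) = inverse s *\<^sub>R (\<Sum>i<n. a i *\<^sub>R x i)"
    by (simp add: scaleR_sum_right)
  ultimately have "inverse s * norm (\<Sum>i<n. a i *\<^sub>R x i) \<le> lp_opnorm (2 * real m) n x"
    using \<open>0 < s\<close> by simp
  then have "norm (\<Sum>i<n. a i *\<^sub>R x i) \<le> s * lp_opnorm (2 * real m) n x"
    using \<open>0 < s\<close> by (simp add: field_simps)
  then show ?thesis unfolding s_def .
qed

end

section \<open>Octahedrality tested on rank one operators\<close>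

lemma sum_lessThan_mult_div_mod:
  fixes M N :: nat
  shows "(\<Sum>q<M * N. h (q div N) (q mod N)) = (\<Sum>j<M. \<Sum>r<N. h j r :: 'b::comm_monoid_add)"
proof (cases "N = 0")
  case False
  have "(\<Sum>q\<in>{k * N..<k * N + N}. h (q div N) (q mod N)) = (\<Sum>r<N. h k r)" for k
  proof -
    have "(\<Sum>q\<in>{k * N..<k * N + N}. h (q div N) (q mod N))
        = (\<Sum>r<N. h ((r + k * N) div N) ((r + k * N) mod N))"
      by (rule sum.reindex_bij_witness[where j="\<lambda>q. q - k * N" and i="\<lambda>r. r + k * N"]) auto
    then show ?thesis using False by simp
  qed
  then show ?thesis by (simp flip: sum.nat_group)
qed simp

text \<open>The operators \<open>B q = e\<^sub>q \<^sub>m\<^sub>o\<^sub>d \<^sub>N \<otimes> b\<^sub>q \<^sub>d\<^sub>i\<^sub>v \<^sub>N\<close>, where \<open>b\<close> enumerates \<open>F\<close>, span all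
  rank one operators \<open>\<phi> \<otimes> w\<close> with \<open>w \<in> span F\<close>.\<close>
lemma octahedral_Lp_rank_one:
  fixes F :: "'a::real_normed_vector set"
  assumes oct: "octahedral_Lp TYPE('a) p N" and "0 < N" "finite F" "0 < \<delta>"
  obtains g where "lp_opnorm p N g = 1"
    "\<And>w \<phi> l. w \<in> span F \<Longrightarrow>
       (1 - \<delta>) * (lp_opnorm p N (\<lambda>i. \<phi> i *\<^sub>R w) + \<bar>l\<bar>) \<le> lp_opnorm p N (\<lambda>i. \<phi> i *\<^sub>R w + l *\<^sub>R g i)"
proof -
  define M where "M = card F"
  obtain b where b: "bij_betw b {..<M} F"
    using ex_bij_betw_nat_finite[OF \<open>finite F\<close>] by (auto simp: M_def atLeast0LessThan)
  define B where "B q i = (if i = q mod N then b (q div N) else 0)" for q i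
  have "B q \<in> Lspace N" for q
    using mod_less_divisor[OF \<open>0 < N\<close>, of q] by (auto simp: Lspace_def B_def)
  then obtain g where "lp_opnorm p N g = 1" and g:
    "\<And>c l. (1 - \<delta>) * (lp_opnorm p N (\<lambda>i. \<Sum>q<M * N. c q *\<^sub>R B q i) + \<bar>l\<bar>)
       \<le> lp_opnorm p N (\<lambda>i. (\<Sum>q<M * N. c q *\<^sub>R B q i) + l *\<^sub>R g i)"
    using oct \<open>0 < \<delta>\<close> unfolding octahedral_Lp_def by meson
  show ?thesis
  proof (rule that[OF \<open>lp_opnorm p N g = 1\<close>])
    fix w \<phi> l assume "w \<in> span F"
    then obtain e where "w = (\<Sum>v\<in>F. e v *\<^sub>R v)"
      using span_finite[OF \<open>finite F\<close>] by auto
    also have "\<dots> = (\<Sum>j<M. e (b j) *\<^sub>R b j)"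
      by (rule sum.reindex_bij_betw[OF b, symmetric])
    finally have w: "w = (\<Sum>j<M. e (b j) *\<^sub>R b j)" .
    define c where "c q = \<phi> (q mod N) * e (b (q div N))" for q
    have tensor: "(\<Sum>q<M * N. c q *\<^sub>R B q i) = \<phi> i *\<^sub>R w" if "i < N" for i
    proof -
      have "(\<Sum>r<N. (\<phi> r * e (b j)) *\<^sub>R (if i = r then b j else 0)) = (\<phi> i * e (b j)) *\<^sub>R b j" for j
        using that by (simp add: if_distrib cong: if_cong)
      then show ?thesis
        unfolding c_def B_def w scaleR_sum_right
        using sum_lessThan_mult_div_mod
          [where h="\<lambda>j r. (\<phi> r * e (b j)) *\<^sub>R (if i = r then b j else 0)"]
        by simp
    qed
    show "(1 - \<delta>) * (lp_opnorm p N (\<lambda>i. \<phi> i *\<^sub>R w) + \<bar>l\<bar>)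
      \<le> lp_opnorm p N (\<lambda>i. \<phi> i *\<^sub>R w + l *\<^sub>R g i)"
    proof -
      have "lp_opnorm p N (\<lambda>i. \<Sum>q<M * N. c q *\<^sub>R B q i) = lp_opnorm p N (\<lambda>i. \<phi> i *\<^sub>R w)"
        "lp_opnorm p N (\<lambda>i. (\<Sum>q<M * N. c q *\<^sub>R B q i) + l *\<^sub>R g i)
         = lp_opnorm p N (\<lambda>i. \<phi> i *\<^sub>R w + l *\<^sub>R g i)"
        using tensor by (auto intro: lp_opnorm_cong)
      then show ?thesis using g[of c l] by simp
    qed
  qed
qed

context
  fixes m :: nat
  assumes m_pos: "0 < m"
begin

lemma norm_le_lp_opnorm_norming_tensor:
  assumes "power_sum m n u = 1"
  shows "norm w \<le> lp_opnorm (2 * real m) n (\<lambda>i. u i ^ (2*m - 1) *\<^sub>R w)"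
proof -
  have "(\<Sum>i<n. u i *\<^sub>R u i ^ (2*m - 1) *\<^sub>R w) = w"
    unfolding scaleR_scaleR power_pred_mult[OF m_pos]
    using assms by (simp add: power_sum_def scaleR_sum_left[symmetric])
  then show ?thesis
    using norm_sum_le_lp_opnorm[OF m_pos, of n u "\<lambda>i. u i ^ (2*m - 1) *\<^sub>R w"] assms by simp
qed

lemma less_lp_opnorm_tensor_plusE:
  assumes "V < lp_opnorm (2 * real m) n (\<lambda>i. u i ^ (2*m - 1) *\<^sub>R w + l *\<^sub>R g i)"
  obtains a where "power_sum m n a \<le> 1" "0 \<le> dual_pairing m n u a"
    "V < norm (dual_pairing m n u a *\<^sub>R w + l *\<^sub>R (\<Sum>i<n. a i *\<^sub>R g i))"
proof -
  have expand: "(\<Sum>i<n. a i *\<^sub>R (u i ^ (2*m - 1) *\<^sub>R w + l *\<^sub>R g i))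
      = dual_pairing m n u a *\<^sub>R w + l *\<^sub>R (\<Sum>i<n. a i *\<^sub>R g i)" for a
    by (simp add: dual_pairing_def scaleR_add_right sum.distrib scaleR_sum_left scaleR_sum_right
        mult.commute)
  obtain a where a: "power_sum m n a \<le> 1"
    "V < norm (dual_pairing m n u a *\<^sub>R w + l *\<^sub>R (\<Sum>i<n. a i *\<^sub>R g i))"
    using assms unfolding less_lp_opnorm_iff[OF m_pos] expand by blast
  show ?thesis
  proof (cases "0 \<le> dual_pairing m n u a")
    case True
    then show ?thesis using a that by blast
  next
    case False
    have "dual_pairing m n u (\<lambda>i. - a i) *\<^sub>R w + l *\<^sub>R (\<Sum>i<n. - a i *\<^sub>R g i)
        = - (dual_pairing m n u a *\<^sub>R w + l *\<^sub>R (\<Sum>i<n. a i *\<^sub>R g i))"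
      by (simp add: sum_negf)
    then show ?thesis
      using a False
      by (intro that[of "\<lambda>i. - a i"]) (simp_all only: norm_minus_cancel power_sum_uminus, simp)
  qed
qed

lemma norm_sum_le_card_mult_lp_opnorm:
  assumes "\<And>i. i < n \<Longrightarrow> \<bar>b i\<bar> \<le> \<rho>"
  shows "norm (\<Sum>i<n. b i *\<^sub>R x i) \<le> real n * \<rho> * lp_opnorm (2 * real m) n x"
proof -
  have "norm (\<Sum>i<n. b i *\<^sub>R x i) \<le> (\<Sum>i<n. \<rho> * lp_opnorm (2 * real m) n x)"
  proof (rule sum_norm_le)
    fix i assume "i \<in> {..<n}"
    then show "norm (b i *\<^sub>R x i) \<le> \<rho> * lp_opnorm (2 * real m) n x"
      using assms[of i] norm_le_lp_opnorm[OF m_pos, of i n x]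
      by (auto intro!: mult_mono simp: lp_opnorm_nonneg[OF m_pos])
  qed
  then show ?thesis by simp
qed

lemma nearly_norming_vector_from_octahedral:
  assumes g: "lp_opnorm (2 * real m) N g = 1"
    and u: "power_sum m N u = 1"
    and oct: "(1 - \<delta>) * (lp_opnorm (2 * real m) N (\<lambda>i. u i ^ (2*m - 1) *\<^sub>R w) + l)
      \<le> lp_opnorm (2 * real m) N (\<lambda>i. u i ^ (2*m - 1) *\<^sub>R w + l *\<^sub>R g i)"
    and "0 < \<delta>" "\<delta> \<le> 1" "0 < l"
  obtains a where "power_sum m N a \<le> 1"
    "(1 - dual_pairing m N u a) * norm w \<le> 2 * \<delta> * (norm w + l)"
    "(1 - 2 * \<delta>) * (norm w + l) < norm (dual_pairing m N u a *\<^sub>R w + l *\<^sub>R (\<Sum>i<N. a i *\<^sub>R g i))"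
proof -
  have "(1 - 2 * \<delta>) * (norm w + l) < (1 - \<delta>) * (norm w + l)"
    using \<open>0 < \<delta>\<close> \<open>0 < l\<close> by (simp add: add_nonneg_pos)
  also have "\<dots> \<le> (1 - \<delta>) * (lp_opnorm (2 * real m) N (\<lambda>i. u i ^ (2*m - 1) *\<^sub>R w) + l)"
    using norm_le_lp_opnorm_norming_tensor[OF u, of w] \<open>\<delta> \<le> 1\<close> by (simp add: mult_left_mono)
  also note oct
  finally obtain a where a: "power_sum m N a \<le> 1" "0 \<le> dual_pairing m N u a"
    and lower: "(1 - 2 * \<delta>) * (norm w + l)
      < norm (dual_pairing m N u a *\<^sub>R w + l *\<^sub>R (\<Sum>i<N. a i *\<^sub>R g i))"
    by (rule less_lp_opnorm_tensor_plusE)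
  have "norm (\<Sum>i<N. a i *\<^sub>R g i) \<le> 1"
    using norm_sum_le_lp_opnorm[OF m_pos a(1), where x=g] g by simp
  have "norm (dual_pairing m N u a *\<^sub>R w + l *\<^sub>R (\<Sum>i<N. a i *\<^sub>R g i))
      \<le> norm (dual_pairing m N u a *\<^sub>R w) + norm (l *\<^sub>R (\<Sum>i<N. a i *\<^sub>R g i))"
    by (rule norm_triangle_ineq)
  also have "\<dots> \<le> dual_pairing m N u a * norm w + l"
    using a(2) \<open>0 < l\<close> \<open>norm (\<Sum>i<N. a i *\<^sub>R g i) \<le> 1\<close> by (simp add: mult_left_le)
  finally have "(1 - dual_pairing m N u a) * norm w \<le> 2 * \<delta> * (norm w + l)"
    using lower by (simp add: algebra_simps)
  then show ?thesis using that a(1) lower by blast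
qed

text \<open>The vector \<open>a\<close> nearly norms \<open>u\<^sup>2\<^sup>m\<^sup>-\<^sup>1 \<otimes> w + l g\<close>, so it nearly attains the norming
  functional of \<open>u\<close>, hence is close to \<open>u\<close> coordinatewise; this transfers the estimate from
  \<open>a\<close> to \<open>u\<close>.\<close>
lemma l1_lower_bound_from_octahedral:
  assumes g: "lp_opnorm (2 * real m) N g = 1"
    and u: "power_sum m N u = 1"
    and oct: "(1 - \<delta>) * (lp_opnorm (2 * real m) N (\<lambda>i. u i ^ (2*m - 1) *\<^sub>R w) + l)
      \<le> lp_opnorm (2 * real m) N (\<lambda>i. u i ^ (2*m - 1) *\<^sub>R w + l *\<^sub>R g i)"
    and close: "\<forall>a. power_sum m N a \<le> 1 \<longrightarrow> 1 - \<eta> \<le> dual_pairing m N u a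
      \<longrightarrow> (\<forall>i<N. \<bar>a i - u i\<bar> < \<rho>)"
    and "0 < \<delta>" "\<delta> \<le> 1" "0 < l"
    and small: "2 * \<delta> * (norm w + l) \<le> \<eta> * norm w"
  shows "(1 - 4 * \<delta> - real N * \<rho>) * (norm w + l) \<le> norm (w + l *\<^sub>R (\<Sum>i<N. u i *\<^sub>R g i))"
proof -
  obtain a where a: "power_sum m N a \<le> 1"
    and defect: "(1 - dual_pairing m N u a) * norm w \<le> 2 * \<delta> * (norm w + l)"
    and lower: "(1 - 2 * \<delta>) * (norm w + l)
      < norm (dual_pairing m N u a *\<^sub>R w + l *\<^sub>R (\<Sum>i<N. a i *\<^sub>R g i))"
    using nearly_norming_vector_from_octahedral[OF g u oct \<open>0 < \<delta>\<close> \<open>\<delta> \<le> 1\<close> \<open>0 < l\<close>] by blast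
  define A where "A = norm w"
  define f where "f = dual_pairing m N u a"
  have "0 < A"
    using small mult_pos_pos[OF \<open>0 < \<delta>\<close> \<open>0 < l\<close>] by (cases "w = 0") (auto simp: A_def)
  have "f \<le> 1" using dual_pairing_le_1[OF m_pos u a] by (simp add: f_def)
  have "(1 - f) * A \<le> \<eta> * A" using defect small unfolding A_def f_def by linarith
  then have "1 - f \<le> \<eta>" using \<open>0 < A\<close> by (rule mult_right_le_imp_le)
  then have "\<bar>u i - a i\<bar> \<le> \<rho>" if "i < N" for i
    using close a that unfolding f_def by (force simp: abs_minus_commute)
  then have rest: "norm (\<Sum>i<N. (u i - a i) *\<^sub>R g i) \<le> real N * \<rho>"
    using norm_sum_le_card_mult_lp_opnorm[of N "\<lambda>i. u i - a i" \<rho> g] g by simp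
  define P where "P = f *\<^sub>R w + l *\<^sub>R (\<Sum>i<N. a i *\<^sub>R g i)"
  define Q where "Q = (1 - f) *\<^sub>R w + l *\<^sub>R (\<Sum>i<N. (u i - a i) *\<^sub>R g i)"
  have "w + l *\<^sub>R (\<Sum>i<N. u i *\<^sub>R g i) = P + Q"
    by (simp add: P_def Q_def algebra_simps sum_subtractf)
  then have "norm P - norm Q \<le> norm (w + l *\<^sub>R (\<Sum>i<N. u i *\<^sub>R g i))"
    by (metis norm_diff_ineq)
  moreover have "norm Q \<le> norm ((1 - f) *\<^sub>R w) + norm (l *\<^sub>R (\<Sum>i<N. (u i - a i) *\<^sub>R g i))"
    unfolding Q_def by (rule norm_triangle_ineq)
  moreover have "\<dots> \<le> (1 - f) * A + l * (real N * \<rho>)"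
    using rest \<open>f \<le> 1\<close> \<open>0 < l\<close> by (simp add: A_def mult_left_mono)
  moreover have "l * (real N * \<rho>) \<le> (A + l) * (real N * \<rho>)"
    using rest \<open>0 < A\<close> by (intro mult_right_mono) (auto intro: order_trans[OF norm_ge_zero])
  moreover have "(1 - 4 * \<delta> - real N * \<rho>) * (A + l)
      = (1 - 2 * \<delta>) * (A + l) - 2 * \<delta> * (A + l) - (A + l) * (real N * \<rho>)"
    by (simp add: algebra_simps)
  ultimately show ?thesis
    using lower defect unfolding A_def[symmetric] P_def[symmetric] f_def[symmetric] by linarith
qed

end

lemma octahedral_Lp_l1_lower_bound_long:
  fixes F :: "'a::real_normed_vector set"
  assumes "0 < m" and oct: "octahedral_Lp TYPE('a) (2 * real m) N"
    and "0 < N" "finite F" "0 < \<kappa>" "\<kappa> \<le> 1"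
  obtains g where "lp_opnorm (2 * real m) N g = 1"
    "\<And>w u l. w \<in> span F \<Longrightarrow> power_sum m N u = 1 \<Longrightarrow> 0 < l \<Longrightarrow> \<kappa> * l \<le> norm w
       \<Longrightarrow> (1 - \<kappa>) * (norm w + l) \<le> norm (w + l *\<^sub>R (\<Sum>i<N. u i *\<^sub>R g i))"
proof -
  define \<rho> where "\<rho> = \<kappa> / (2 * real N)"
  have "0 < \<rho>" using \<open>0 < \<kappa>\<close> \<open>0 < N\<close> by (simp add: \<rho>_def)
  obtain \<eta> where "0 < \<eta>" and close:
    "\<And>u a i. power_sum m N u = 1 \<Longrightarrow> power_sum m N a \<le> 1 \<Longrightarrow> 1 - \<eta> \<le> dual_pairing m N u a
      \<Longrightarrow> i < N \<Longrightarrow> \<bar>a i - u i\<bar> < \<rho>"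
    using dual_pairing_near_1_imp_close[OF \<open>0 < m\<close> \<open>0 < \<rho>\<close>] by blast
  define \<delta> where "\<delta> = min (\<kappa> / 8) (\<eta> * \<kappa> / (2 * (1 + \<kappa>)))"
  have "0 < \<delta>" "\<delta> \<le> 1" using \<open>0 < \<kappa>\<close> \<open>\<kappa> \<le> 1\<close> \<open>0 < \<eta>\<close> by (auto simp: \<delta>_def)
  have \<delta>_le: "\<delta> \<le> \<eta> * \<kappa> / (2 * (1 + \<kappa>))" by (simp add: \<delta>_def)
  obtain g where g: "lp_opnorm (2 * real m) N g = 1" and g_oct:
    "\<And>w \<phi> l. w \<in> span F \<Longrightarrow> (1 - \<delta>) * (lp_opnorm (2 * real m) N (\<lambda>i. \<phi> i *\<^sub>R w) + \<bar>l\<bar>)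
       \<le> lp_opnorm (2 * real m) N (\<lambda>i. \<phi> i *\<^sub>R w + l *\<^sub>R g i)"
    using octahedral_Lp_rank_one[OF oct \<open>0 < N\<close> \<open>finite F\<close> \<open>0 < \<delta>\<close>] by blast
  show ?thesis
  proof (rule that[OF g])
    fix w u l
    assume "w \<in> span F" "power_sum m N u = 1" "0 < l" "\<kappa> * l \<le> norm w"
    have "norm w + l \<le> (1 + \<kappa>) / \<kappa> * norm w"
      using \<open>\<kappa> * l \<le> norm w\<close> \<open>0 < \<kappa>\<close> by (simp add: field_simps)
    then have "2 * \<delta> * (norm w + l) \<le> (2 * \<delta> * (1 + \<kappa>) / \<kappa>) * norm w"
      using \<open>0 < \<delta>\<close> mult_left_mono[of _ _ "2 * \<delta>"] by fastforce
    also have "\<dots> \<le> \<eta> * norm w"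
      using \<delta>_le \<open>0 < \<kappa>\<close> by (intro mult_right_mono) (simp_all add: field_simps)
    finally have small: "2 * \<delta> * (norm w + l) \<le> \<eta> * norm w" .
    have oct_u: "(1 - \<delta>) * (lp_opnorm (2 * real m) N (\<lambda>i. u i ^ (2*m - 1) *\<^sub>R w) + l)
      \<le> lp_opnorm (2 * real m) N (\<lambda>i. u i ^ (2*m - 1) *\<^sub>R w + l *\<^sub>R g i)"
      using g_oct[OF \<open>w \<in> span F\<close>, of "\<lambda>i. u i ^ (2*m - 1)" l] \<open>0 < l\<close> by simp
    have "(1 - 4 * \<delta> - real N * \<rho>) * (norm w + l) \<le> norm (w + l *\<^sub>R (\<Sum>i<N. u i *\<^sub>R g i))"
      by (rule l1_lower_bound_from_octahedral[where \<eta>=\<eta> and \<rho>=\<rho>,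
            OF \<open>0 < m\<close> g \<open>power_sum m N u = 1\<close> oct_u _ \<open>0 < \<delta>\<close> \<open>\<delta> \<le> 1\<close> \<open>0 < l\<close> small])
        (use close \<open>power_sum m N u = 1\<close> in blast)
    moreover have "1 - \<kappa> \<le> 1 - 4 * \<delta> - real N * \<rho>"
      using \<open>0 < N\<close> by (simp add: \<rho>_def \<delta>_def)
    ultimately show "(1 - \<kappa>) * (norm w + l) \<le> norm (w + l *\<^sub>R (\<Sum>i<N. u i *\<^sub>R g i))"
      by (smt (verit) mult_right_mono norm_ge_zero \<open>0 < l\<close>)
  qed
qed

text \<open>A nonzero \<open>x\<^sub>0 \<in> W\<close> of norm \<open>l\<close> shows that \<open>l v\<close> itself has norm close to \<open>l\<close>,
  which covers the vectors \<open>w \<in> W\<close> too short for the hypothesis.\<close>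
lemma l1_lower_bound_extend_to_short:
  fixes v :: "'a::real_normed_vector"
  assumes "subspace W" "x0 \<in> W" "x0 \<noteq> 0" "0 \<le> \<kappa>" "\<kappa> \<le> 1"
    and large: "\<And>w l. w \<in> W \<Longrightarrow> 0 < l \<Longrightarrow> \<kappa> * l \<le> norm w
      \<Longrightarrow> (1 - \<kappa>) * (norm w + l) \<le> norm (w + l *\<^sub>R v)"
    and "w \<in> W" "0 \<le> l"
  shows "(1 - 4 * \<kappa>) * (norm w + l) \<le> norm (w + l *\<^sub>R v)"
proof -
  consider "l = 0" | "0 < l" "\<kappa> * l \<le> norm w" | "0 < l" "norm w < \<kappa> * l"
    using \<open>0 \<le> l\<close> by fastforce
  then show ?thesis
  proof cases
    case 1
    then show ?thesis
      using \<open>0 \<le> \<kappa>\<close> mult_nonneg_nonneg[OF \<open>0 \<le> \<kappa>\<close> norm_ge_zero[of w]] by (simp add: algebra_simps)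
  next
    case 2
    then have "(1 - \<kappa>) * (norm w + l) \<le> norm (w + l *\<^sub>R v)" using large \<open>w \<in> W\<close> by blast
    then show ?thesis using \<open>0 \<le> \<kappa>\<close> \<open>0 < l\<close> by (smt (verit) mult_right_mono norm_ge_zero)
  next
    case 3
    define x where "x = (l / norm x0) *\<^sub>R x0"
    have "x \<in> W" using \<open>subspace W\<close> \<open>x0 \<in> W\<close> by (simp add: x_def subspace_scale)
    moreover have "norm x = l" using \<open>x0 \<noteq> 0\<close> \<open>0 < l\<close> by (simp add: x_def)
    ultimately have "(1 - \<kappa>) * (l + l) \<le> norm (x + l *\<^sub>R v)"
      using large[of x l] \<open>0 < l\<close> \<open>\<kappa> \<le> 1\<close> by simp
    also have "\<dots> \<le> l + norm (l *\<^sub>R v)"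
      using norm_triangle_ineq[of x "l *\<^sub>R v"] \<open>norm x = l\<close> by linarith
    finally have "(1 - 2 * \<kappa>) * l \<le> norm (l *\<^sub>R v)" by (simp add: algebra_simps)
    moreover have "norm (l *\<^sub>R v) - norm w \<le> norm (w + l *\<^sub>R v)"
      by (metis add.commute norm_diff_ineq)
    moreover have "\<kappa> * norm w \<ge> 0" using \<open>0 \<le> \<kappa>\<close> by simp
    ultimately show ?thesis using 3 by (simp add: algebra_simps)
  qed
qed

lemma octahedral_Lp_l1_lower_bound:
  fixes F :: "'a::real_normed_vector set"
  assumes "0 < m" "octahedral_Lp TYPE('a) (2 * real m) N" "0 < N" "finite F"
    and "x0 \<in> span F" "x0 \<noteq> 0" "0 < \<kappa>" "\<kappa> \<le> 1"
  obtains g where "lp_opnorm (2 * real m) N g = 1"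
    "\<And>w u l. w \<in> span F \<Longrightarrow> power_sum m N u = 1 \<Longrightarrow> 0 \<le> l
       \<Longrightarrow> (1 - 4 * \<kappa>) * (norm w + l) \<le> norm (w + l *\<^sub>R (\<Sum>i<N. u i *\<^sub>R g i))"
proof -
  obtain g where g: "lp_opnorm (2 * real m) N g = 1" and large:
    "\<And>w u l. w \<in> span F \<Longrightarrow> power_sum m N u = 1 \<Longrightarrow> 0 < l \<Longrightarrow> \<kappa> * l \<le> norm w
       \<Longrightarrow> (1 - \<kappa>) * (norm w + l) \<le> norm (w + l *\<^sub>R (\<Sum>i<N. u i *\<^sub>R g i))"
    using octahedral_Lp_l1_lower_bound_long[OF assms(1-4,7,8)] by blast
  show ?thesis
  proof (rule that[OF g])
    fix w u and l :: real assume "w \<in> span F" "power_sum m N u = 1" "0 \<le> l"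
    then show "(1 - 4 * \<kappa>) * (norm w + l) \<le> norm (w + l *\<^sub>R (\<Sum>i<N. u i *\<^sub>R g i))"
      using l1_lower_bound_extend_to_short[OF subspace_span assms(5,6)] large assms(7,8) by simp
  qed
qed

section \<open>Embedding \<open>\<ell>\<^sub>\<infinity>\<^sup>n\<close>\<close>

lemma linf_norm_ge: "\<bar>y $ i\<bar> \<le> linf_norm y"
  unfolding linf_norm_def by (rule Max_ge) auto

lemma linf_norm_nonneg: "0 \<le> linf_norm y"
  by (rule order_trans[OF abs_ge_zero linf_norm_ge])

lemma linf_norm_attained:
  obtains i where "linf_norm y = \<bar>y $ i\<bar>"
proof -
  have "linf_norm y \<in> range (\<lambda>i. \<bar>y $ i\<bar>)" unfolding linf_norm_def by (rule Max_in) auto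
  then show ?thesis using that by blast
qed

lemma linf_norm_le_lp_norm:
  assumes "0 < m" "\<iota> ` {..<N} = UNIV"
  shows "linf_norm y \<le> lp_norm (2 * real m) N (\<lambda>i. y $ \<iota> i)"
proof -
  obtain j where j: "linf_norm y = \<bar>y $ j\<bar>" by (rule linf_norm_attained)
  have "j \<in> \<iota> ` {..<N}" using assms(2) by simp
  then obtain i where "i < N" "\<iota> i = j" by auto
  then have "\<bar>y $ j\<bar> ^ (2*m) \<le> power_sum m N (\<lambda>i. y $ \<iota> i)"
    unfolding power_sum_def power_even_abs[of "2*m", simplified]
    using member_le_sum[of i "{..<N}" "\<lambda>i. y $ \<iota> i ^ (2*m)"] by (auto simp: zero_le_even_power)
  then have "root (2*m) (\<bar>y $ j\<bar> ^ (2*m)) \<le> root (2*m) (power_sum m N (\<lambda>i. y $ \<iota> i))"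
    using assms(1) by (intro real_root_le_mono) auto
  moreover have "root (2*m) (\<bar>y $ j\<bar> ^ (2*m)) = \<bar>y $ j\<bar>"
    by (rule real_root_power_cancel) (use assms(1) in auto)
  ultimately show ?thesis using j lp_norm_even[OF assms(1), of N "\<lambda>i. y $ \<iota> i"] by linarith
qed

lemma lp_norm_le_linf_norm:
  assumes "0 < m"
  shows "lp_norm (2 * real m) N (\<lambda>i. y $ \<iota> i) \<le> root (2*m) (real N) * linf_norm y"
proof -
  have "\<bar>y $ \<iota> i\<bar> ^ (2*m) \<le> linf_norm y ^ (2*m)" for i
    by (intro power_mono linf_norm_ge) simp
  then have "power_sum m N (\<lambda>i. y $ \<iota> i) \<le> (\<Sum>i<N. linf_norm y ^ (2*m))"
    unfolding power_sum_def by (intro sum_mono) (simp add: power_even_abs)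
  then have "root (2*m) (power_sum m N (\<lambda>i. y $ \<iota> i)) \<le> root (2*m) (real N * linf_norm y ^ (2*m))"
    using assms by (intro real_root_le_mono) auto
  also have "\<dots> = root (2*m) (real N) * linf_norm y"
    unfolding real_root_mult by (subst real_root_power_cancel) (use assms linf_norm_nonneg in auto)
  finally show ?thesis by (simp only: lp_norm_even[OF assms])
qed

definition linf_embedding ::
    "nat \<Rightarrow> nat \<Rightarrow> (nat \<Rightarrow> 'n::finite) \<Rightarrow> (nat \<Rightarrow> 'a::real_normed_vector) \<Rightarrow> real ^ 'n \<Rightarrow> 'a" where
  "linf_embedding m N \<iota> g y = (1 / root (2*m) (real N)) *\<^sub>R (\<Sum>i<N. y $ \<iota> i *\<^sub>R g i)"

lemma linear_linf_embedding: "linear (linf_embedding m N \<iota> g)"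
  by (rule linearI)
    (simp_all add: linf_embedding_def scaleR_add_left sum.distrib scaleR_add_right scaleR_sum_right)

lemma norm_linf_embedding_le:
  assumes "0 < m" "lp_opnorm (2 * real m) N g \<le> 1"
  shows "norm (linf_embedding m N \<iota> g y) \<le> linf_norm y"
proof -
  have "norm (\<Sum>i<N. y $ \<iota> i *\<^sub>R g i)
      \<le> lp_norm (2 * real m) N (\<lambda>i. y $ \<iota> i) * lp_opnorm (2 * real m) N g"
    by (rule norm_sum_le_lp_norm_mult_lp_opnorm[OF assms(1)])
  also have "\<dots> \<le> lp_norm (2 * real m) N (\<lambda>i. y $ \<iota> i) * 1"
    using assms power_sum_nonneg by (intro mult_left_mono) (simp_all add: lp_norm_even)
  also have "\<dots> \<le> root (2*m) (real N) * linf_norm y" using lp_norm_le_linf_norm[OF assms(1)] by simp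
  finally have sum_le: "norm (\<Sum>i<N. y $ \<iota> i *\<^sub>R g i) \<le> root (2*m) (real N) * linf_norm y" .
  show ?thesis
  proof (cases "N = 0")
    case True
    then show ?thesis by (simp add: linf_embedding_def linf_norm_nonneg)
  next
    case False
    then have "0 < root (2*m) (real N)" using assms(1) by simp
    then show ?thesis using sum_le by (simp add: linf_embedding_def pos_divide_le_eq mult.commute)
  qed
qed

lemma linf_embedding_lower_bound:
  assumes "0 < m" "0 < N" "\<iota> ` {..<N} = UNIV" "0 \<le> c" "c \<le> 1"
    and almost: "\<And>u l. power_sum m N u = 1 \<Longrightarrow> 0 \<le> l
      \<Longrightarrow> c * (norm z + l) \<le> norm (z + l *\<^sub>R (\<Sum>i<N. u i *\<^sub>R g i))"
  shows "c / root (2*m) (real N) * (norm z + linf_norm y) \<le> norm (z + linf_embedding m N \<iota> g y)"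
proof -
  define r where "r = root (2*m) (real N)"
  define t where "t = lp_norm (2 * real m) N (\<lambda>i. y $ \<iota> i)"
  have "1 \<le> r" using assms(1,2) by (simp add: r_def)
  have "c / r \<le> c" using \<open>1 \<le> r\<close> mult_left_mono[OF \<open>1 \<le> r\<close> \<open>0 \<le> c\<close>] by (simp add: divide_le_eq)
  have "linf_norm y \<le> t" unfolding t_def by (rule linf_norm_le_lp_norm[OF assms(1,3)])
  show ?thesis
  proof (cases "t = 0")
    case True
    then have "y $ j = 0" for j using linf_norm_ge[of y j] \<open>linf_norm y \<le> t\<close> by simp
    then have "y = 0" by (simp add: vec_eq_iff)
    then have "linf_embedding m N \<iota> g y = 0" "linf_norm y = 0"
      by (simp_all add: linf_embedding_def linf_norm_def)
    moreover have "c / r * norm z \<le> norm z"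
      using \<open>c / r \<le> c\<close> \<open>c \<le> 1\<close> \<open>0 \<le> c\<close> \<open>1 \<le> r\<close> by (intro mult_left_le_one_le) auto
    ultimately show ?thesis by (simp add: r_def)
  next
    case False
    have "0 < t" using False \<open>linf_norm y \<le> t\<close> linf_norm_nonneg[of y] by linarith
    have "t ^ (2*m) = power_sum m N (\<lambda>i. y $ \<iota> i)"
      using assms(1) power_sum_nonneg by (simp add: t_def lp_norm_even)
    then have "power_sum m N (\<lambda>i. inverse t * y $ \<iota> i) = 1"
      using \<open>0 < t\<close> by (simp add: power_sum_scale power_inverse flip: \<open>t ^ (2*m) = _\<close>)
    moreover have "linf_embedding m N \<iota> g y = (t / r) *\<^sub>R (\<Sum>i<N. (inverse t * y $ \<iota> i) *\<^sub>R g i)"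
      using \<open>0 < t\<close> by (simp add: linf_embedding_def r_def scaleR_sum_right mult.assoc[symmetric])
    ultimately have "c * (norm z + t / r) \<le> norm (z + linf_embedding m N \<iota> g y)"
      using almost \<open>0 < t\<close> \<open>1 \<le> r\<close> by simp
    moreover have "c / r * norm z \<le> c * norm z"
      using \<open>c / r \<le> c\<close> by (rule mult_right_mono) simp
    moreover have "c / r * linf_norm y \<le> c / r * t"
      using \<open>linf_norm y \<le> t\<close> \<open>0 \<le> c\<close> \<open>1 \<le> r\<close> by (intro mult_left_mono) auto
    moreover have "c * (norm z + t / r) = c * norm z + c / r * t" by (simp add: algebra_simps)
    moreover have "c / r * (norm z + linf_norm y) = c / r * norm z + c / r * linf_norm y"
      by (rule distrib_left)
    ultimately show ?thesis unfolding r_def by linarith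
  qed
qed

lemma exists_root_le:
  assumes "0 < \<theta>"
  obtains m where "0 < m" "root (2*m) (real N) \<le> 1 + \<theta>"
proof -
  define m where "m = nat \<lceil>real N / \<theta>\<rceil> + 1"
  have "real N / \<theta> \<le> real m" unfolding m_def by linarith
  then have "real N \<le> real m * \<theta>" using assms by (simp add: pos_divide_le_eq)
  also have "\<dots> \<le> real (2*m) * \<theta>" using assms by (intro mult_right_mono) auto
  also have "\<dots> \<le> (1 + \<theta>) ^ (2*m)" using assms Bernoulli_inequality[of \<theta> "2*m"] by simp
  finally have "real N \<le> (1 + \<theta>) ^ (2*m)" .
  moreover have "0 < m" by (simp add: m_def)
  ultimately have "root (2*m) (real N) \<le> root (2*m) ((1 + \<theta>) ^ (2*m))"
    by (intro real_root_le_mono) auto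
  also have "\<dots> = 1 + \<theta>" using \<open>0 < m\<close> assms by (simp add: real_root_power_cancel)
  finally show ?thesis using \<open>0 < m\<close> that by blast
qed

lemma octahedral_Lp_nontrivial:
  assumes "octahedral_Lp TYPE('a::real_normed_vector) p n"
  shows "\<exists>x::'a. x \<noteq> 0"
proof (rule ccontr)
  assume "\<not> (\<exists>x::'a. x \<noteq> 0)"
  then have zero: "x = 0" for x :: 'a by blast
  obtain y :: "nat \<Rightarrow> 'a" where "lp_opnorm p n y = 1"
    using assms unfolding octahedral_Lp_def by (metis less_numeral_extra(1) not_less_zero)
  moreover have "(\<lambda>_. 0) \<in> {a. lp_norm p n a \<le> 1}" by (simp add: lp_norm_def)
  then have "lp_opnorm p n y = 0"
    unfolding lp_opnorm_def using zero[of "\<Sum>i<n. _ i *\<^sub>R y i"] by (auto intro!: cSUP_const)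
  ultimately show False by simp
qed

lemma exists_exponent_for_tolerance:
  assumes "0 < N" "0 < \<epsilon>" "\<epsilon> < 1"
  obtains m where "0 < m" "1 - \<epsilon> \<le> (1 - \<epsilon> / 2) / root (2*m) (real N)"
proof -
  obtain m where "0 < m" and root_N: "root (2*m) (real N) \<le> 1 + \<epsilon> / 2"
    using exists_root_le[of "\<epsilon> / 2" N] assms(2) by auto
  have "(1 - \<epsilon>) * root (2*m) (real N) \<le> (1 - \<epsilon>) * (1 + \<epsilon> / 2)"
    using root_N assms(3) by (intro mult_left_mono) auto
  also have "\<dots> = 1 - \<epsilon> / 2 - \<epsilon> * \<epsilon> / 2" by (simp add: field_simps)
  also have "\<dots> \<le> 1 - \<epsilon> / 2" by simp
  finally show ?thesis
    using \<open>0 < m\<close> assms(1) that by (simp add: le_divide_eq)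
qed

lemma exists_linf_embedding:
  fixes F :: "'a::real_normed_vector set"
  assumes oct: "\<And>p. 1 < p \<Longrightarrow> octahedral_Lp TYPE('a) p CARD('n::finite)"
    and "finite F" "x0 \<in> span F" "x0 \<noteq> 0" "0 < \<epsilon>" "\<epsilon> < 1"
  shows "\<exists>T :: real ^ 'n \<Rightarrow> 'a. linear T \<and> (\<forall>y. norm (T y) \<le> linf_norm y) \<and>
           (\<forall>y. \<forall>z\<in>span F. (1 - \<epsilon>) * (norm z + linf_norm y) \<le> norm (z + T y))"
proof -
  define N where "N = CARD('n)"
  have "0 < N" by (simp add: N_def)
  obtain \<iota> :: "nat \<Rightarrow> 'n" where \<iota>: "\<iota> ` {..<N} = UNIV"
    using ex_bij_betw_nat_finite[of "UNIV :: 'n set"]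
    by (auto simp: N_def bij_betw_def atLeast0LessThan)
  obtain m where "0 < m" and factor: "1 - \<epsilon> \<le> (1 - \<epsilon> / 2) / root (2*m) (real N)"
    using exists_exponent_for_tolerance[OF \<open>0 < N\<close> assms(5,6)] by blast
  have "octahedral_Lp TYPE('a) (2 * real m) N" using oct \<open>0 < m\<close> by (simp add: N_def)
  then obtain g where g: "lp_opnorm (2 * real m) N g = 1" and almost:
    "\<And>w u l. w \<in> span F \<Longrightarrow> power_sum m N u = 1 \<Longrightarrow> 0 \<le> l
       \<Longrightarrow> (1 - 4 * (\<epsilon> / 8)) * (norm w + l) \<le> norm (w + l *\<^sub>R (\<Sum>i<N. u i *\<^sub>R g i))"
    using octahedral_Lp_l1_lower_bound[OF \<open>0 < m\<close> _ \<open>0 < N\<close> assms(2-4), of "\<epsilon> / 8"] assms(5,6)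
    by auto
  show ?thesis
  proof (intro exI[of _ "linf_embedding m N \<iota> g"] conjI allI ballI)
    show "linear (linf_embedding m N \<iota> g)" by (rule linear_linf_embedding)
    show "norm (linf_embedding m N \<iota> g y) \<le> linf_norm y" for y
      using g by (intro norm_linf_embedding_le[OF \<open>0 < m\<close>]) simp
    fix y :: "real ^ 'n" and z assume "z \<in> span F"
    have "(1 - \<epsilon>) * (norm z + linf_norm y)
        \<le> (1 - \<epsilon> / 2) / root (2*m) (real N) * (norm z + linf_norm y)"
      using factor linf_norm_nonneg[of y] by (intro mult_right_mono) auto
    also have "\<dots> \<le> norm (z + linf_embedding m N \<iota> g y)"
      using assms(5,6) almost[OF \<open>z \<in> span F\<close>]
      by (intro linf_embedding_lower_bound[OF \<open>0 < m\<close> \<open>0 < N\<close> \<iota>]) auto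
    finally show "(1 - \<epsilon>) * (norm z + linf_norm y) \<le> norm (z + linf_embedding m N \<iota> g y)" .
  qed
qed

theorem theorem3p4:
  fixes Z :: "'a::banach set" and \<epsilon> :: real
  assumes oct: "\<And>(n::nat) (p::real). n \<ge> 1 \<Longrightarrow> 1 < p \<Longrightarrow> octahedral_Lp TYPE('a) p n"
    and eps: "\<epsilon> > 0"
    and Zsub: "subspace Z"
    and Zfin: "\<exists>B. finite B \<and> span B = Z"
  shows "\<exists>T :: real ^ 'n::finite \<Rightarrow> 'a. linear T \<and> (\<forall>y. norm (T y) \<le> linf_norm y) \<and>
           (\<forall>y. \<forall>z\<in>Z. norm (z + T y) \<ge> (1 - \<epsilon>) * (norm z + linf_norm y))"
proof (cases "\<epsilon> < 1")
  case False
  then have "(1 - \<epsilon>) * (norm z + linf_norm y) \<le> norm (z + 0)" for z :: 'a and y :: "real ^ 'n"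
    using linf_norm_nonneg[of y] by (smt (verit) mult_nonpos_nonneg norm_ge_zero)
  then show ?thesis by (intro exI[of _ "\<lambda>_. 0"]) (auto simp: linf_norm_nonneg linear_iff)
next
  case True
  obtain x0 :: 'a where "x0 \<noteq> 0" using octahedral_Lp_nontrivial[OF oct[of 1 2]] by auto
  obtain B where "finite B" and Z: "Z = span B" using Zfin by blast
  have "\<exists>T :: real ^ 'n \<Rightarrow> 'a. linear T \<and> (\<forall>y. norm (T y) \<le> linf_norm y) \<and>
      (\<forall>y. \<forall>z\<in>span (insert x0 B). (1 - \<epsilon>) * (norm z + linf_norm y) \<le> norm (z + T y))"
    by (rule exists_linf_embedding)
      (use oct \<open>finite B\<close> \<open>x0 \<noteq> 0\<close> eps True in \<open>auto intro: span_base\<close>)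
  moreover have "Z \<subseteq> span (insert x0 B)" using Z by (simp add: span_mono subset_insertI)
  ultimately show ?thesis by blast
qed

end
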